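(* Let $(J,[\cdot,\cdot],\alpha)$ be a Hom-Jacobi-Jordan algebra, $V$ a vector space with a linear map $\beta\colon V\to V$, and $\rho\colon J\to\mathrm{End}(V)$ a linear map such that for all $x,y\in J$: $\rho(\alpha(x))\circ\beta=\beta\circ\rho(x)$ and $\rho([x,y])\circ\beta=-\rho(\alpha(x))\circ\rho(y)-\rho(\alpha(y))\circ\rho(x)$. Define $d^1$ on linear maps $f\colon J\to V$ with $\beta\circ f=f\circ\alpha$ by $d^1(f)(x,y)=f([x,y])-\rho(x)f(y)-\rho(y)f(x)$, and $d^2$ on symmetric bilinear maps $g\colon J\times J\to V$ by $d^2(g)(x,y,z)=g(\alpha(x),[y,z])+g(\alpha(y),[x,z])+g(\alpha(z),[x,y])+\rho(\alpha(x))g(y,z)+\rho(\alpha(y))g(x,z)+\rho(\alpha(z))g(x,y)$. Then $d^2(d^1(f))=0$ for every linear $f\colon J\to V$ with $\beta\circ f=f\circ\alpha$.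
   Context: A Hom-Jacobi-Jordan algebra is a triple $(J,[\cdot,\cdot],\alpha)$ with $J$ a vector space, $[\cdot,\cdot]$ a symmetric bilinear map and $\alpha$ linear, such that $\alpha([x,y])=[\alpha(x),\alpha(y)]$ and $[\alpha(x),[y,z]]+[\alpha(y),[z,x]]+[\alpha(z),[x,y]]=0$ for all $x,y,z\in J$. *)

theory Defs
  imports "HOL-Analysis.Analysis"
begin

definition bilinear_map ::
  "('k::field \<Rightarrow> 'a::ab_group_add \<Rightarrow> 'a) \<Rightarrow> ('k \<Rightarrow> 'b::ab_group_add \<Rightarrow> 'b)
   \<Rightarrow> ('k \<Rightarrow> 'c::ab_group_add \<Rightarrow> 'c) \<Rightarrow> ('a \<Rightarrow> 'b \<Rightarrow> 'c) \<Rightarrow> bool" where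
  "bilinear_map sA sB sC g \<longleftrightarrow>
     (\<forall>y. Vector_Spaces.linear sA sC (\<lambda>x. g x y)) \<and> (\<forall>x. Vector_Spaces.linear sB sC (g x))"

definition hom_jacobi_jordan ::
  "('k::field \<Rightarrow> 'j::ab_group_add \<Rightarrow> 'j) \<Rightarrow> ('j \<Rightarrow> 'j \<Rightarrow> 'j) \<Rightarrow> ('j \<Rightarrow> 'j) \<Rightarrow> bool" where
  "hom_jacobi_jordan sJ br alpha \<longleftrightarrow>
     vector_space sJ \<and>
     bilinear_map sJ sJ sJ br \<and>
     (\<forall>x y. br x y = br y x) \<and>
     Vector_Spaces.linear sJ sJ alpha \<and>
     (\<forall>x y. alpha (br x y) = br (alpha x) (alpha y)) \<and>
     (\<forall>x y z. br (alpha x) (br y z) + br (alpha y) (br z x) + br (alpha z) (br x y) = 0)"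

definition d1 :: "('j \<Rightarrow> 'j \<Rightarrow> 'j) \<Rightarrow> ('j \<Rightarrow> 'v \<Rightarrow> 'v::ab_group_add) \<Rightarrow> ('j \<Rightarrow> 'v) \<Rightarrow> 'j \<Rightarrow> 'j \<Rightarrow> 'v" where
  "d1 br rho f x y = f (br x y) - rho x (f y) - rho y (f x)"

definition d2 :: "('j \<Rightarrow> 'j \<Rightarrow> 'j) \<Rightarrow> ('j \<Rightarrow> 'j) \<Rightarrow> ('j \<Rightarrow> 'v \<Rightarrow> 'v::ab_group_add)
    \<Rightarrow> ('j \<Rightarrow> 'j \<Rightarrow> 'v) \<Rightarrow> 'j \<Rightarrow> 'j \<Rightarrow> 'j \<Rightarrow> 'v" where
  "d2 br alpha rho g x y z =
     g (alpha x) (br y z) + g (alpha y) (br x z) + g (alpha z) (br x y)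
     + rho (alpha x) (g y z) + rho (alpha y) (g x z) + rho (alpha z) (g x y)"

end

theory Submission
  imports Defs
begin

text \<open>Expanding \<open>d\<^sup>2 g (x,y,z)\<close> for \<open>g = d\<^sup>1 f\<close> gives three kinds of terms.
  The terms \<open>f [\<alpha> x, [y, z]]\<close> add up to \<open>f\<close> of the Hom-Jacobi sum, hence vanish.
  The terms \<open>\<rho>(\<alpha> x) f [y, z]\<close> occur once from \<open>g (\<alpha> x) [y, z]\<close> and once from
  \<open>\<rho>(\<alpha> x) g(y, z)\<close>, with opposite signs.
  Finally, using \<open>f \<circ> \<alpha> = \<beta> \<circ> f\<close> and the second representation axiom,
  \<open>\<rho>[y, z] f(\<alpha> x) = \<rho>[y, z] (\<beta> (f x))\<close> becomes \<open>- \<rho>(\<alpha> y) \<rho>(z) f(x) - \<rho>(\<alpha> z) \<rho>(y) f(x)\<close>,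
  and these six double-action terms cancel those coming from \<open>\<rho>(\<alpha> x) g(y, z)\<close>.\<close>

lemma additive_if_linear:
  assumes "Vector_Spaces.linear s1 s2 f"
  shows "Modules.additive f"
  using module_hom.add[OF module_hom_linearI[OF assms]] by unfold_locales

lemma hom_jacobi_jordan_commute:
  "hom_jacobi_jordan sJ br alpha \<Longrightarrow> br x y = br y x"
  unfolding hom_jacobi_jordan_def by blast

lemma hom_jacobi_jordan_jacobi:
  "hom_jacobi_jordan sJ br alpha \<Longrightarrow>
    br (alpha x) (br y z) + br (alpha y) (br z x) + br (alpha z) (br x y) = 0"
  unfolding hom_jacobi_jordan_def by blast

lemma additive_jacobi_sum_eq_0:
  assumes "Modules.additive f"
    and commute: "\<And>a b. br a b = br b a"
    and jacobi: "\<And>a b c. br (alpha a) (br b c) + br (alpha b) (br c a) + br (alpha c) (br a b) = 0"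
  shows "f (br (alpha x) (br y z)) + f (br (alpha y) (br x z)) + f (br (alpha z) (br x y)) = 0"
proof -
  interpret Modules.additive f by fact
  have "f (br (alpha x) (br y z)) + f (br (alpha y) (br x z)) + f (br (alpha z) (br x y))
      = f (br (alpha x) (br y z) + br (alpha y) (br z x) + br (alpha z) (br x y))"
    by (simp add: add commute[of x z])
  also have "\<dots> = 0"
    by (simp add: jacobi zero)
  finally show ?thesis .
qed

lemma d1_alpha_bracket:
  assumes f_alpha: "\<And>a. f (alpha a) = beta (f a)"
    and rho_bracket: "\<And>a b v. rho (br a b) (beta v) = - rho (alpha a) (rho b v) - rho (alpha b) (rho a v)"
  shows "d1 br rho f (alpha x) (br y z)
    = f (br (alpha x) (br y z)) - rho (alpha x) (f (br y z))
      + rho (alpha y) (rho z (f x)) + rho (alpha z) (rho y (f x))"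
  by (simp add: d1_def f_alpha rho_bracket)

lemma additive_d1:
  assumes "Modules.additive h"
  shows "h (d1 br rho f x y) = h (f (br x y)) - h (rho x (f y)) - h (rho y (f x))"
  by (simp add: d1_def additive.diff[OF assms])

lemma d2_d1_eq_0:
  fixes br :: "'j::ab_group_add \<Rightarrow> 'j \<Rightarrow> 'j" and rho :: "'j \<Rightarrow> 'v::ab_group_add \<Rightarrow> 'v"
  assumes commute: "\<And>a b. br a b = br b a"
    and jacobi: "\<And>a b c. br (alpha a) (br b c) + br (alpha b) (br c a) + br (alpha c) (br a b) = 0"
    and rho_additive: "\<And>w. Modules.additive (rho w)"
    and rho_bracket: "\<And>a b v. rho (br a b) (beta v) = - rho (alpha a) (rho b v) - rho (alpha b) (rho a v)"
    and f_additive: "Modules.additive f"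
    and f_alpha: "\<And>a. f (alpha a) = beta (f a)"
  shows "d2 br alpha rho (d1 br rho f) = (\<lambda>x y z. 0)"
proof (intro ext)
  fix x y z
  have jacobi_f: "f (br (alpha x) (br y z)) + f (br (alpha y) (br x z)) + f (br (alpha z) (br x y)) = 0"
    using f_additive commute jacobi by (rule additive_jacobi_sum_eq_0)
  show "d2 br alpha rho (d1 br rho f) x y z = 0"
    unfolding d2_def d1_alpha_bracket[of f alpha beta rho br, OF f_alpha rho_bracket]
      additive_d1[OF rho_additive]
    using jacobi_f by (simp add: algebra_simps)
qed

text \<open>The linear structure enters only through additivity.\<close>

theorem theorem2p7:
  fixes sJ :: "'k::field \<Rightarrow> 'j::ab_group_add \<Rightarrow> 'j"
    and sV :: "'k \<Rightarrow> 'v::ab_group_add \<Rightarrow> 'v"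
    and br :: "'j \<Rightarrow> 'j \<Rightarrow> 'j" and alpha :: "'j \<Rightarrow> 'j"
    and beta :: "'v \<Rightarrow> 'v" and rho :: "'j \<Rightarrow> 'v \<Rightarrow> 'v"
    and f :: "'j \<Rightarrow> 'v"
  assumes HJJ: "hom_jacobi_jordan sJ br alpha"
    and V: "vector_space sV"
    and beta_lin: "Vector_Spaces.linear sV sV beta"
    and rho_End: "\<forall>x. Vector_Spaces.linear sV sV (rho x)"
    and rho_lin: "\<forall>v. Vector_Spaces.linear sJ sV (\<lambda>x. rho x v)"
    and rep1: "\<forall>x. rho (alpha x) \<circ> beta = beta \<circ> rho x"
    and rep2: "\<forall>x y. rho (br x y) \<circ> beta = (\<lambda>v. - rho (alpha x) (rho y v) - rho (alpha y) (rho x v))"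
    and f_lin: "Vector_Spaces.linear sJ sV f"
    and f_comm: "beta \<circ> f = f \<circ> alpha"
  shows "d2 br alpha rho (d1 br rho f) = (\<lambda>x y z. 0)"
proof (rule d2_d1_eq_0)
  show "br a b = br b a" for a b
    using HJJ by (rule hom_jacobi_jordan_commute)
  show "br (alpha a) (br b c) + br (alpha b) (br c a) + br (alpha c) (br a b) = 0" for a b c
    using HJJ by (rule hom_jacobi_jordan_jacobi)
  show "Modules.additive (rho w)" for w
    using rho_End by (blast intro: additive_if_linear)
  show "rho (br a b) (beta v) = - rho (alpha a) (rho b v) - rho (alpha b) (rho a v)" for a b v
    using fun_cong[OF rep2[rule_format, of a b]] by simp
  show "Modules.additive f"
    using f_lin by (rule additive_if_linear)
  show "f (alpha a) = beta (f a)" for a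
    using fun_cong[OF f_comm, of a] by simp
qed

end
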